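(* Fix $n\in\mathbb{N}$, let $U_1,\dots,U_n$ be independent uniform random variables on $[0,1]$, let $I(t)=(f_1(t;U_1),\dots,f_n(t;U_n))$, and define the uniform Mallows process $\mathcal{M}^U_t=\Phi(I(t))$, $t\ge0$. Then $(\mathcal{M}^U_t)_{t\ge0}$ is a regular Mallows process.
   Context: For $j\in\mathbb{N}$, $u\in(0,1)$: $f_j(t;u)=\lfloor\log(1-u(1-t^j))/\log t\rfloor$ for $t\notin\{0,1\}$, $f_j(0;u)=0$, $f_j(1;u)=\lfloor ju\rfloor$. $\mathcal{E}_n=\{(I_1,\dots,I_n)\in\mathbb{Z}^n:0\le I_j\le j-1\}$; $\mathrm{Inv}_j(\sigma)=|\{i\in[j-1]:\sigma(i)>\sigma(j)\}|$, $\mathrm{Inv}=\sum_j\mathrm{Inv}_j$; $\Phi:\mathcal{E}_n\to\mathcal{S}_n$ the unique bijection with $\mathrm{Inv}_j(\Phi(I))=I_j$ (for $k=n,\dots,1$: $[n]\setminus\{\sigma(n),\dots,\sigma(k+1)\}=\{x_1<\dots<x_k\}$, $\sigma(k)=x_{k-I_k}$). Mallows distribution $\pi_{n,q}(\sigma)=q^{\mathrm{Inv}(\sigma)}/\prod_{k=1}^n\sum_{\ell=0}^{k-1}q^\ell$ ($0^0=1$); a Mallows process is an $\mathcal{S}_n$-valued càdlàg process with $\mathcal{M}_t\sim\pi_{n,t}$ for all $t$. Regular: each $t\mapsto\mathrm{Inv}_j(\mathcal{M}_t)$ nondecreasing, $\mathrm{Inv}(\mathcal{M}_t)\le\mathrm{Inv}(\mathcal{M}_{t-})+1$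 for all $t$, and the processes $(\mathrm{Inv}_j(\mathcal{M}_t))_{t\ge0}$, $j\in[n]$, mutually independent. *)

theory Defs
  imports "HOL-Probability.Probability" "HOL-Combinatorics.Permutations"
begin

text \<open>Permutations of [n] are functions nat => nat that permute {1..n}.\<close>

definition fj :: "nat \<Rightarrow> real \<Rightarrow> real \<Rightarrow> int" where
  "fj j t u = (if t = 0 then 0
               else if t = 1 then \<lfloor>real j * u\<rfloor>
               else \<lfloor>ln (1 - u * (1 - t ^ j)) / ln t\<rfloor>)"

definition InvJ :: "nat \<Rightarrow> (nat \<Rightarrow> nat) \<Rightarrow> nat" where
  "InvJ j \<sigma> = card {i \<in> {1..<j}. \<sigma> i > \<sigma> j}"

definition Inv :: "nat \<Rightarrow> (nat \<Rightarrow> nat) \<Rightarrow> nat" where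
  "Inv n \<sigma> = (\<Sum>j\<in>{1..n}. InvJ j \<sigma>)"

definition Ecodes :: "nat \<Rightarrow> (nat \<Rightarrow> int) set" where
  "Ecodes n = {I. \<forall>j\<in>{1..n}. 0 \<le> I j \<and> I j \<le> int j - 1}"

definition Phi :: "nat \<Rightarrow> (nat \<Rightarrow> int) \<Rightarrow> (nat \<Rightarrow> nat)" where
  "Phi n I = (THE \<sigma>. \<sigma> permutes {1..n} \<and> (\<forall>j\<in>{1..n}. int (InvJ j \<sigma>) = I j))"

definition mallows :: "nat \<Rightarrow> real \<Rightarrow> (nat \<Rightarrow> nat) \<Rightarrow> real" where
  "mallows n q \<sigma> = q ^ Inv n \<sigma> / (\<Prod>k\<in>{1..n}. \<Sum>l<k. q ^ l)"

definition cadlag_discrete :: "(real \<Rightarrow> 'a) \<Rightarrow> bool" where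
  "cadlag_discrete X \<longleftrightarrow>
     (\<forall>t\<ge>0. \<forall>\<^sub>F s in at_right t. X s = X t) \<and>
     (\<forall>t>0. \<exists>a. \<forall>\<^sub>F s in at_left t. X s = a)"

text \<open>Left limit X(t-), with the convention X(0-) = X(0).\<close>
definition left_lim :: "(real \<Rightarrow> 'a) \<Rightarrow> real \<Rightarrow> 'a" where
  "left_lim X t = (if t \<le> 0 then X 0 else (THE a. \<forall>\<^sub>F s in at_left t. X s = a))"

definition mallows_process ::
  "'w measure \<Rightarrow> nat \<Rightarrow> (real \<Rightarrow> 'w \<Rightarrow> (nat \<Rightarrow> nat)) \<Rightarrow> bool" where
  "mallows_process M n X \<longleftrightarrow>
     (AE \<omega> in M. (\<forall>t\<ge>0. X t \<omega> permutes {1..n}) \<and> cadlag_discrete (\<lambda>t. X t \<omega>)) \<and>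
     (\<forall>t\<ge>0. \<forall>\<sigma>. \<sigma> permutes {1..n} \<longrightarrow>
        {\<omega> \<in> space M. X t \<omega> = \<sigma>} \<in> sets M \<and>
        measure M {\<omega> \<in> space M. X t \<omega> = \<sigma>} = mallows n t \<sigma>)"

definition regular_mallows_process ::
  "'w measure \<Rightarrow> nat \<Rightarrow> (real \<Rightarrow> 'w \<Rightarrow> (nat \<Rightarrow> nat)) \<Rightarrow> bool" where
  "regular_mallows_process M n X \<longleftrightarrow>
     mallows_process M n X \<and>
     (AE \<omega> in M. (\<forall>j\<in>{1..n}. \<forall>s t. 0 \<le> s \<longrightarrow> s \<le> t \<longrightarrow>
                      InvJ j (X s \<omega>) \<le> InvJ j (X t \<omega>)) \<and>
                  (\<forall>t\<ge>0. Inv n (X t \<omega>) \<le> Inv n (left_lim (\<lambda>s. X s \<omega>) t) + 1)) \<and>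
     prob_space.indep_vars M (\<lambda>_. PiM {0..} (\<lambda>_. count_space UNIV))
        (\<lambda>j \<omega>. restrict (\<lambda>t. InvJ j (X t \<omega>)) {0..}) {1..n}"

definition uniform_mallows :: "nat \<Rightarrow> (nat \<Rightarrow> 'w \<Rightarrow> real) \<Rightarrow> real \<Rightarrow> 'w \<Rightarrow> (nat \<Rightarrow> nat)" where
  "uniform_mallows n U t \<omega> = Phi n (\<lambda>j. fj j t (U j \<omega>))"

end

theory Submission
  imports Defs
begin

text \<open>For fixed \<open>t\<close>, \<open>fj j t\<close> is the quantile function of the law on \<open>{0..<j}\<close> with
  weights proportional to \<open>t ^ c\<close>, so the codes \<open>fj j t (U j)\<close> are independent with exactly
  the factors of the Mallows weight, and the bijection \<open>Phi\<close> turns them into a Mallows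
  permutation. As \<open>t\<close> grows, the thresholds of these quantile functions decrease continuously
  and strictly, so each code is a nondecreasing right-continuous step function of \<open>t\<close> that
  jumps by one whenever a threshold passes \<open>U j\<close>. Two codes jump at the same time only if
  \<open>(U j, U j')\<close> lies on a curve that is the graph of a function, a null event; hence the
  total number of inversions jumps by at most one. Finally the \<open>j\<close>-th code path depends on
  \<open>U j\<close> alone, which gives the independence of the paths.\<close>

lemma measurable_count_space_finite_family:
  fixes V :: "'i \<Rightarrow> 'w \<Rightarrow> 'c::countable" and g :: "('i \<Rightarrow> 'c) \<Rightarrow> 'b"
  assumes I: "finite I" and V: "\<And>i. i \<in> I \<Longrightarrow> V i \<in> M \<rightarrow>\<^sub>M count_space UNIV"
    and g: "\<And>f f'. (\<forall>i\<in>I. f i = f' i) \<Longrightarrow> g f = g f'"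
  shows "(\<lambda>\<omega>. g (\<lambda>i. V i \<omega>)) \<in> M \<rightarrow>\<^sub>M count_space UNIV"
proof -
  have level_sets: "{\<omega> \<in> space M. \<forall>i\<in>I. V i \<omega> = c i} \<in> sets M" for c
    using I V by (intro sets.sets_Collect_finite_All) (auto intro: measurable_count_space_const)
  show ?thesis
    unfolding measurable_def
  proof (intro CollectI conjI ballI)
    show "(\<lambda>\<omega>. g (\<lambda>i. V i \<omega>)) \<in> space M \<rightarrow> space (count_space UNIV)" by simp
    fix B :: "'b set"
    have "(\<lambda>\<omega>. g (\<lambda>i. V i \<omega>)) -` B \<inter> space M =
      (\<Union>c\<in>{c \<in> PiE I (\<lambda>_. UNIV). g c \<in> B}. {\<omega> \<in> space M. \<forall>i\<in>I. V i \<omega> = c i})"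
    proof (intro set_eqI iffI)
      fix \<omega> assume \<omega>: "\<omega> \<in> (\<lambda>\<omega>. g (\<lambda>i. V i \<omega>)) -` B \<inter> space M"
      have "g (restrict (\<lambda>i. V i \<omega>) I) = g (\<lambda>i. V i \<omega>)" by (intro g) auto
      then show "\<omega> \<in> (\<Union>c\<in>{c \<in> PiE I (\<lambda>_. UNIV). g c \<in> B}. {\<omega> \<in> space M. \<forall>i\<in>I. V i \<omega> = c i})"
        using \<omega> by (intro UN_I[of "restrict (\<lambda>i. V i \<omega>) I"]) auto
    next
      fix \<omega> assume "\<omega> \<in> (\<Union>c\<in>{c \<in> PiE I (\<lambda>_. UNIV). g c \<in> B}. {\<omega> \<in> space M. \<forall>i\<in>I. V i \<omega> = c i})"
      then obtain c where c: "g c \<in> B" "\<omega> \<in> space M" "\<forall>i\<in>I. V i \<omega> = c i" by auto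
      have "g (\<lambda>i. V i \<omega>) = g c" using c(3) by (intro g) auto
      then show "\<omega> \<in> (\<lambda>\<omega>. g (\<lambda>i. V i \<omega>)) -` B \<inter> space M" using c by auto
    qed
    also have "\<dots> \<in> sets M"
      using level_sets I
      by (intro sets.countable_UN'' countable_subset[OF _ countable_PiE[of I "\<lambda>_. UNIV"]]) auto
    finally show "(\<lambda>\<omega>. g (\<lambda>i. V i \<omega>)) -` B \<inter> space M \<in> sets M" .
  qed
qed

lemma (in prob_space) indep_vars_AE_cong:
  assumes ind: "indep_vars M' X I" and rv: "\<And>i. i \<in> I \<Longrightarrow> random_variable (M' i) (Y i)"
    and N: "N \<in> null_sets M" and eq: "\<And>i \<omega>. i \<in> I \<Longrightarrow> \<omega> \<in> space M - N \<Longrightarrow> X i \<omega> = Y i \<omega>"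
  shows "indep_vars M' Y I"
  unfolding indep_vars_def2
proof (intro conjI ballI)
  show "random_variable (M' i) (Y i)" if "i \<in> I" for i using rv that .
  have indX: "indep_sets (\<lambda>i. {X i -` A \<inter> space M |A. A \<in> sets (M' i)}) I"
    and rvX: "\<And>i. i \<in> I \<Longrightarrow> random_variable (M' i) (X i)"
    using ind unfolding indep_vars_def2 by simp_all
  have prob_eq: "prob A = prob B" if "A \<in> events" "B \<in> events" "A - N = B - N" for A B
    by (rule measure_eq_AE[OF AE_I'[OF N]]) (use that in auto)
  show "indep_sets (\<lambda>i. {Y i -` A \<inter> space M |A. A \<in> sets (M' i)}) I"
    unfolding indep_sets_def
  proof (intro conjI allI impI ballI)
    fix i assume "i \<in> I"
    then show "{Y i -` A \<inter> space M |A. A \<in> sets (M' i)} \<subseteq> events"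
      using rv by (auto intro: measurable_sets)
  next
    fix J A assume J: "J \<subseteq> I" "J \<noteq> {}" "finite J"
      and A: "A \<in> (\<Pi> j\<in>J. {Y j -` A \<inter> space M |A. A \<in> sets (M' j)})"
    then have "\<forall>j\<in>J. \<exists>C. C \<in> sets (M' j) \<and> A j = Y j -` C \<inter> space M" by auto
    then obtain C where C: "\<And>j. j \<in> J \<Longrightarrow> C j \<in> sets (M' j) \<and> A j = Y j -` C j \<inter> space M"
      by metis
    define B where "B j = X j -` C j \<inter> space M" for j
    have "B \<in> (\<Pi> j\<in>J. {X j -` A \<inter> space M |A. A \<in> sets (M' j)})"
      unfolding B_def using C by auto
    then have Bprod: "prob (\<Inter>j\<in>J. B j) = (\<Prod>j\<in>J. prob (B j))"
      using indX J unfolding indep_sets_def by blast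
    have Bev: "B j \<in> events" if "j \<in> J" for j
      unfolding B_def using measurable_sets[OF rvX[of j] C[of j, THEN conjunct1]] J that by auto
    have Aev: "A j \<in> events" if "j \<in> J" for j
      using measurable_sets[OF rv[of j] C[of j, THEN conjunct1]] C[of j] J that by auto
    have dif: "A j - N = B j - N" if "j \<in> J" for j
      using C eq J that unfolding B_def by auto
    have "prob (\<Inter>j\<in>J. A j) = prob (\<Inter>j\<in>J. B j)"
      using Aev Bev dif J by (intro prob_eq sets.finite_INT) blast+
    also have "\<dots> = (\<Prod>j\<in>J. prob (A j))"
      using Bprod prob_eq[OF Aev Bev dif] by simp
    finally show "prob (\<Inter>j\<in>J. A j) = (\<Prod>j\<in>J. prob (A j))" .
  qed
qed

lemma (in prob_space) indep_var_of_indep_vars: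
  assumes ind: "indep_vars M' X I" and "i \<in> I" "j \<in> I" "i \<noteq> j"
  shows "indep_var (M' i) (X i) (M' j) (X j)"
proof -
  have "indep_var (PiM {i} M') (\<lambda>\<omega>. restrict (\<lambda>k. X k \<omega>) {i}) (PiM {j} M') (\<lambda>\<omega>. restrict (\<lambda>k. X k \<omega>) {j})"
    by (rule indep_var_restrict[OF ind]) (use assms in auto)
  then have "indep_var (M' i) ((\<lambda>f. f i) \<circ> (\<lambda>\<omega>. restrict (\<lambda>k. X k \<omega>) {i}))
                       (M' j) ((\<lambda>f. f j) \<circ> (\<lambda>\<omega>. restrict (\<lambda>k. X k \<omega>) {j}))"
    by (rule indep_var_compose) (auto intro: measurable_component_singleton)
  then show ?thesis by (simp add: comp_def)
qed

text \<open>Fubini over the law of \<open>X\<close>: every vertical section of \<open>A\<close> is at most a point,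
  which the law of \<open>Y\<close> does not charge.\<close>
lemma (in prob_space) AE_pair_notin_graph:
  fixes X Y :: "'a \<Rightarrow> 'b::t1_space"
  assumes ind: "indep_var borel X borel Y"
    and atomless: "\<And>y. emeasure (distr M borel Y) {y} = 0"
    and A: "A \<in> sets (borel \<Otimes>\<^sub>M borel)"
    and graph: "\<And>x y y'. (x, y) \<in> A \<Longrightarrow> (x, y') \<in> A \<Longrightarrow> y = y'"
  shows "AE \<omega> in M. (X \<omega>, Y \<omega>) \<notin> A"
proof -
  have rv: "random_variable borel X" "random_variable borel Y"
    using indep_var_rv1[OF ind] indep_var_rv2[OF ind] .
  interpret Y: prob_space "distr M borel Y" by (rule prob_space_distr[OF rv(2)])
  have null_section: "emeasure (distr M borel Y) (Pair x -` A) = 0" for x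
  proof (cases "Pair x -` A = {}")
    case False
    then obtain y0 where "(x, y0) \<in> A" by auto
    then have "Pair x -` A \<subseteq> {y0}" using graph by auto
    then have "emeasure (distr M borel Y) (Pair x -` A) \<le> emeasure (distr M borel Y) {y0}"
      by (intro emeasure_mono) (auto intro: borel_closed closed_singleton)
    then show ?thesis using atomless[of y0] by simp
  qed simp
  have "emeasure M ((\<lambda>\<omega>. (X \<omega>, Y \<omega>)) -` A \<inter> space M) =
      emeasure (distr M (borel \<Otimes>\<^sub>M borel) (\<lambda>\<omega>. (X \<omega>, Y \<omega>))) A"
    using A rv by (intro emeasure_distr[symmetric] measurable_Pair) auto
  also have "\<dots> = emeasure (distr M borel X \<Otimes>\<^sub>M distr M borel Y) A"
    using ind unfolding indep_var_distribution_eq by simp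
  also have "\<dots> = (\<integral>\<^sup>+x. emeasure (distr M borel Y) (Pair x -` A) \<partial>distr M borel X)"
  proof (rule Y.emeasure_pair_measure_alt)
    have "sets (distr M borel X \<Otimes>\<^sub>M distr M borel Y) = sets (borel \<Otimes>\<^sub>M borel)"
      by (intro sets_pair_measure_cong) auto
    then show "A \<in> sets (distr M borel X \<Otimes>\<^sub>M distr M borel Y)" using A by simp
  qed
  also have "\<dots> = 0" using null_section by simp
  finally have "emeasure M ((\<lambda>\<omega>. (X \<omega>, Y \<omega>)) -` A \<inter> space M) = 0" .
  moreover have "(\<lambda>\<omega>. (X \<omega>, Y \<omega>)) -` A \<inter> space M \<in> events"
    using A rv by (intro measurable_sets[OF measurable_Pair]) auto
  ultimately show ?thesis by (intro AE_I[where N="(\<lambda>\<omega>. (X \<omega>, Y \<omega>)) -` A \<inter> space M"]) auto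
qed

lemma sets_borel_image_Ioi:
  fixes \<Gamma> :: "real \<Rightarrow> 'a::t2_space"
  assumes cont: "continuous_on {0<..} \<Gamma>"
  shows "\<Gamma> ` {0<..} \<in> sets borel"
proof -
  have cover: "{0<..} = (\<Union>m::nat. {1 / real (Suc m)..real (Suc m)})"
  proof (intro set_eqI iffI)
    fix t :: real assume "t \<in> {0<..}"
    then have t: "0 < t" by simp
    define m where "m = nat \<lceil>max t (1 / t)\<rceil>"
    have "t \<le> real (Suc m)" "1 / t \<le> real (Suc m)" unfolding m_def by linarith+
    moreover from this(2) have "1 / real (Suc m) \<le> t"
      using t by (simp add: divide_simps mult.commute)
    ultimately show "t \<in> (\<Union>m::nat. {1 / real (Suc m)..real (Suc m)})" by auto
  next
    fix t :: real assume "t \<in> (\<Union>m::nat. {1 / real (Suc m)..real (Suc m)})"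
    then obtain m :: nat where "1 / real (Suc m) \<le> t" by auto
    moreover have "0 < 1 / real (Suc m)" by simp
    ultimately show "t \<in> {0<..}" by (meson greaterThan_iff less_le_trans)
  qed
  have "\<Gamma> ` {1 / real (Suc m)..real (Suc m)} \<in> sets borel" for m
  proof (intro borel_closed compact_imp_closed compact_continuous_image compact_Icc)
    have "{1 / real (Suc m)..real (Suc m)} \<subseteq> {0<..}"
    proof
      fix x assume "x \<in> {1 / real (Suc m)..real (Suc m)}"
      moreover have "0 < 1 / real (Suc m)" by simp
      ultimately show "x \<in> {0<..}" by (meson atLeastAtMost_iff greaterThan_iff less_le_trans)
    qed
    then show "continuous_on {1 / real (Suc m)..real (Suc m)} \<Gamma>"
      by (rule continuous_on_subset[OF cont])
  qed
  then show ?thesis unfolding cover image_UN by auto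
qed

lemma sum_le_1_if_at_most_one_nonzero:
  fixes D :: "'a \<Rightarrow> nat"
  assumes le_1: "\<And>j. j \<in> S \<Longrightarrow> D j \<le> 1"
    and unique: "\<And>j j'. j \<in> S \<Longrightarrow> j' \<in> S \<Longrightarrow> D j \<noteq> 0 \<Longrightarrow> D j' \<noteq> 0 \<Longrightarrow> j = j'"
  shows "sum D S \<le> 1"
proof (cases "finite S \<and> (\<exists>j\<in>S. D j \<noteq> 0)")
  case True
  then obtain j0 where j0: "j0 \<in> S" "D j0 \<noteq> 0" and fin: "finite S" by blast
  have "sum D S = D j0 + sum D (S - {j0})" using j0 fin by (intro sum.remove)
  also have "sum D (S - {j0}) = 0" using unique j0 by (intro sum.neutral) blast
  finally show ?thesis using le_1[OF j0(1)] by simp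
next
  case False
  then show ?thesis by (metis sum.infinite sum.neutral zero_le_one)
qed

section \<open>Inversion tables\<close>

lemma InvJ_eq_imp_order_eq_last:
  fixes \<sigma> \<tau> :: "nat \<Rightarrow> nat"
  assumes \<sigma>: "\<sigma> permutes S" and \<tau>: "\<tau> permutes S"
    and order: "\<forall>i\<in>{1..<j}. \<forall>i'\<in>{1..<j}. \<sigma> i < \<sigma> i' \<longleftrightarrow> \<tau> i < \<tau> i'"
    and inv: "InvJ j \<sigma> = InvJ j \<tau>"
  shows "\<forall>i\<in>{1..<j}. \<sigma> i < \<sigma> j \<longleftrightarrow> \<tau> i < \<tau> j"
proof -
  define A where "A = {i \<in> {1..<j}. \<sigma> i > \<sigma> j}"
  define B where "B = {i \<in> {1..<j}. \<tau> i > \<tau> j}"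
  have inj: "\<sigma> x = \<sigma> y \<longleftrightarrow> x = y" "\<tau> x = \<tau> y \<longleftrightarrow> x = y" for x y
    using inj_eq[OF permutes_inj[OF \<sigma>]] inj_eq[OF permutes_inj[OF \<tau>]] by auto
  have fin: "finite A" "finite B" unfolding A_def B_def by auto
  \<comment> \<open>Both sets are upward closed for the common relative order, so they are nested.\<close>
  have "A \<subseteq> B \<or> B \<subseteq> A"
  proof (rule ccontr)
    assume "\<not> (A \<subseteq> B \<or> B \<subseteq> A)"
    then obtain x y where x: "x \<in> A" "x \<notin> B" and y: "y \<in> B" "y \<notin> A" by blast
    have xy: "x \<in> {1..<j}" "y \<in> {1..<j}" "x \<noteq> y" using x y unfolding A_def B_def by auto
    show False
    proof (cases "\<sigma> x < \<sigma> y")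
      case True
      then show False using x y xy(2) unfolding A_def by auto
    next
      case False
      then have "\<tau> y < \<tau> x" using order xy inj(1)[of x y] by (auto simp: not_less le_less)
      then show False using x y xy(1) unfolding B_def by auto
    qed
  qed
  moreover have "card A = card B" using inv unfolding InvJ_def A_def B_def by simp
  ultimately have AB: "A = B" using fin by (metis card_subset_eq)
  show ?thesis
  proof
    fix i assume i: "i \<in> {1..<j}"
    then have "\<sigma> i < \<sigma> j \<longleftrightarrow> i \<notin> A" "\<tau> i < \<tau> j \<longleftrightarrow> i \<notin> B"
      using inj[of i j] unfolding A_def B_def by auto
    then show "\<sigma> i < \<sigma> j \<longleftrightarrow> \<tau> i < \<tau> j" using AB by simp
  qed
qed

lemma InvJ_eq_imp_order_eq:
  fixes \<sigma> \<tau> :: "nat \<Rightarrow> nat"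
  assumes \<sigma>: "\<sigma> permutes {1..n}" and \<tau>: "\<tau> permutes {1..n}"
    and inv: "\<forall>j\<in>{1..n}. InvJ j \<sigma> = InvJ j \<tau>"
  shows "j \<le> Suc n \<Longrightarrow> \<forall>i\<in>{1..<j}. \<forall>i'\<in>{1..<j}. \<sigma> i < \<sigma> i' \<longleftrightarrow> \<tau> i < \<tau> i'"
proof (induction j)
  case (Suc j)
  then have IH: "\<forall>i\<in>{1..<j}. \<forall>i'\<in>{1..<j}. \<sigma> i < \<sigma> i' \<longleftrightarrow> \<tau> i < \<tau> i'" by simp
  show ?case
  proof (cases "j = 0")
    case False
    then have last: "\<forall>i\<in>{1..<j}. \<sigma> i < \<sigma> j \<longleftrightarrow> \<tau> i < \<tau> j"
      using InvJ_eq_imp_order_eq_last[OF \<sigma> \<tau> IH] inv Suc.prems by simp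
    have "\<sigma> i \<noteq> \<sigma> j" "\<tau> i \<noteq> \<tau> j" if "i \<in> {1..<j}" for i
      using that inj_eq[OF permutes_inj[OF \<sigma>]] inj_eq[OF permutes_inj[OF \<tau>]] by auto
    then have last': "\<forall>i\<in>{1..<j}. \<sigma> j < \<sigma> i \<longleftrightarrow> \<tau> j < \<tau> i"
      using last by (meson linorder_neq_iff order.asym)
    show ?thesis
    proof (intro ballI)
      fix i i' assume "i \<in> {1..<Suc j}" "i' \<in> {1..<Suc j}"
      then consider "i = j" "i' = j" | "i = j" "i' \<in> {1..<j}" | "i \<in> {1..<j}" "i' = j"
        | "i \<in> {1..<j}" "i' \<in> {1..<j}"
        by fastforce
      then show "\<sigma> i < \<sigma> i' \<longleftrightarrow> \<tau> i < \<tau> i'"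
      proof cases
        case 1 then show ?thesis by simp
      next
        case 2 then show ?thesis using last' by blast
      next
        case 3 then show ?thesis using last by blast
      next
        case 4 then show ?thesis using IH by blast
      qed
    qed
  qed simp
qed simp

lemma permutes_value_eq_card:
  fixes \<sigma> :: "nat \<Rightarrow> nat"
  assumes \<sigma>: "\<sigma> permutes {1..n}" and j: "j \<in> {1..n}"
  shows "\<sigma> j = card {i \<in> {1..n}. \<sigma> i \<le> \<sigma> j}"
proof -
  have bij: "bij_betw \<sigma> {1..n} {1..n}" using \<sigma> by (rule permutes_imp_bij)
  have "\<sigma> ` {i \<in> {1..n}. \<sigma> i \<le> \<sigma> j} = {v \<in> \<sigma> ` {1..n}. v \<le> \<sigma> j}"
    by auto
  also have "\<dots> = {1..\<sigma> j}"
  proof -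
    have "\<sigma> j \<in> {1..n}" using bij j by (auto simp: bij_betw_def)
    then show ?thesis using bij by (auto simp: bij_betw_def)
  qed
  moreover have "inj_on \<sigma> {i \<in> {1..n}. \<sigma> i \<le> \<sigma> j}"
    by (rule inj_on_subset[OF bij_betw_imp_inj_on[OF bij]]) auto
  ultimately show ?thesis by (metis card_atLeastAtMost card_image diff_Suc_1)
qed

lemma permutes_eqI_InvJ:
  fixes \<sigma> \<tau> :: "nat \<Rightarrow> nat"
  assumes \<sigma>: "\<sigma> permutes {1..n}" and \<tau>: "\<tau> permutes {1..n}"
    and inv: "\<forall>j\<in>{1..n}. InvJ j \<sigma> = InvJ j \<tau>"
  shows "\<sigma> = \<tau>"
proof
  fix j
  show "\<sigma> j = \<tau> j"
  proof (cases "j \<in> {1..n}")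
    case True
    have "\<forall>i\<in>{1..n}. \<forall>i'\<in>{1..n}. \<sigma> i < \<sigma> i' \<longleftrightarrow> \<tau> i < \<tau> i'"
      using InvJ_eq_imp_order_eq[OF \<sigma> \<tau> inv, of "Suc n"] by (simp add: atLeastLessThanSuc_atLeastAtMost)
    then have "{i \<in> {1..n}. \<sigma> i \<le> \<sigma> j} = {i \<in> {1..n}. \<tau> i \<le> \<tau> j}"
      using True by (auto simp: not_less[symmetric])
    then show ?thesis using permutes_value_eq_card[OF \<sigma> True] permutes_value_eq_card[OF \<tau> True] by simp
  qed (use \<sigma> \<tau> in \<open>simp add: permutes_not_in\<close>)
qed

lemma InvJ_less:
  assumes "1 \<le> j" shows "InvJ j \<sigma> < j"
proof -
  have "InvJ j \<sigma> \<le> card {1..<j}" unfolding InvJ_def by (intro card_mono) auto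
  then show ?thesis using assms by simp
qed

definition inversion_table :: "nat \<Rightarrow> (nat \<Rightarrow> nat) \<Rightarrow> nat \<Rightarrow> int" where
  "inversion_table n \<sigma> = restrict (\<lambda>j. int (InvJ j \<sigma>)) {1..n}"

lemma inversion_table_image:
  "inversion_table n ` {\<sigma>. \<sigma> permutes {1..n}} = PiE {1..n} (\<lambda>j. {0..int j - 1})"
  \<comment> \<open>injectivity plus counting: both sides have \<open>n!\<close> elements\<close>
proof (rule card_subset_eq)
  show "finite (PiE {1..n} (\<lambda>j. {0..int j - 1}))" by (simp add: finite_PiE)
  show "inversion_table n ` {\<sigma>. \<sigma> permutes {1..n}} \<subseteq> PiE {1..n} (\<lambda>j. {0..int j - 1})"
  proof (rule image_subsetI)
    fix \<sigma> :: "nat \<Rightarrow> nat"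
    have "int (InvJ j \<sigma>) \<le> int j - 1" if "1 \<le> j" for j using InvJ_less[OF that, of \<sigma>] by linarith
    then show "inversion_table n \<sigma> \<in> PiE {1..n} (\<lambda>j. {0..int j - 1})"
      by (auto simp: inversion_table_def)
  qed
  have "inj_on (inversion_table n) {\<sigma>. \<sigma> permutes {1..n}}"
    by (rule inj_onI, rule permutes_eqI_InvJ[of _ n])
       (auto simp: inversion_table_def fun_eq_iff restrict_def split: if_splits)
  then have "card (inversion_table n ` {\<sigma>. \<sigma> permutes {1..n}}) = fact n"
    by (simp add: card_image card_permutations)
  also have "fact n = (\<Prod>j\<in>{1..n}. card {0..int j - 1})" by (simp add: fact_prod)
  also have "\<dots> = card (PiE {1..n} (\<lambda>j. {0..int j - 1}))" by (simp add: card_PiE)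
  finally show "card (inversion_table n ` {\<sigma>. \<sigma> permutes {1..n}}) = card (PiE {1..n} (\<lambda>j. {0..int j - 1}))" .
qed

lemma Phi_spec:
  assumes "I \<in> Ecodes n"
  shows "Phi n I permutes {1..n} \<and> (\<forall>j\<in>{1..n}. int (InvJ j (Phi n I)) = I j)"
proof -
  have "restrict I {1..n} \<in> PiE {1..n} (\<lambda>j. {0..int j - 1})" using assms by (auto simp: Ecodes_def)
  then obtain \<sigma> where \<sigma>: "\<sigma> permutes {1..n}" "inversion_table n \<sigma> = restrict I {1..n}"
    by (metis (no_types, lifting) inversion_table_image imageE mem_Collect_eq)
  then have spec: "\<sigma> permutes {1..n} \<and> (\<forall>j\<in>{1..n}. int (InvJ j \<sigma>) = I j)"
    unfolding inversion_table_def by (metis restrict_apply')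
  have "\<tau> = \<sigma>" if "\<tau> permutes {1..n} \<and> (\<forall>j\<in>{1..n}. int (InvJ j \<tau>) = I j)" for \<tau>
    using that spec permutes_eqI_InvJ[of \<tau> n \<sigma>] by (metis of_nat_eq_iff)
  then show ?thesis
    unfolding Phi_def using theI[of "\<lambda>\<tau>. \<tau> permutes {1..n} \<and> (\<forall>j\<in>{1..n}. int (InvJ j \<tau>) = I j)", OF spec] by blast
qed

lemma Phi_eq_iff:
  assumes "I \<in> Ecodes n" and \<sigma>: "\<sigma> permutes {1..n}"
  shows "Phi n I = \<sigma> \<longleftrightarrow> (\<forall>j\<in>{1..n}. I j = int (InvJ j \<sigma>))"
  using Phi_spec[OF assms(1)] permutes_eqI_InvJ[OF _ \<sigma>, of "Phi n I"] by auto

lemma Phi_cong: "(\<And>j. j \<in> {1..n} \<Longrightarrow> I j = I' j) \<Longrightarrow> Phi n I = Phi n I'"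
  unfolding Phi_def by (metis (no_types, lifting))

section \<open>Truncated geometric laws\<close>

definition geom_sum :: "nat \<Rightarrow> real \<Rightarrow> real" where
  "geom_sum m t = (\<Sum>l<m. t ^ l)"

text \<open>Under the law proportional to \<open>t ^ c\<close> on \<open>{0..<j}\<close>, the value \<open>c\<close> has probability
  \<open>t ^ c / geom_sum j t\<close> and \<open>geom_cdf j k t\<close> is the probability of \<open>{0..<k}\<close>.
  The function \<open>fj j t\<close> is the quantile function of this law (\<open>fj_ge_iff\<close> below).\<close>
definition geom_cdf :: "nat \<Rightarrow> nat \<Rightarrow> real \<Rightarrow> real" where
  "geom_cdf j k t = geom_sum k t / geom_sum j t"

lemma geom_sum_0 [simp]: "geom_sum 0 t = 0"
  by (simp add: geom_sum_def)

lemma geom_sum_Suc: "geom_sum (Suc m) t = geom_sum m t + t ^ m"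
  by (simp add: geom_sum_def)

lemma geom_sum_at_0: "geom_sum m 0 = (if m = 0 then 0 else 1)"
  by (induction m) (simp_all add: geom_sum_Suc)

lemma geom_sum_at_1: "geom_sum m 1 = real m"
  by (simp add: geom_sum_def)

lemma one_minus_mult_geom_sum: "(1 - t) * geom_sum m t = 1 - t ^ m"
  by (simp add: geom_sum_def one_diff_power_eq)

lemma geom_sum_nonneg: "0 \<le> t \<Longrightarrow> 0 \<le> geom_sum m t"
  unfolding geom_sum_def by (intro sum_nonneg) auto

lemma geom_sum_mono: "0 \<le> t \<Longrightarrow> m \<le> m' \<Longrightarrow> geom_sum m t \<le> geom_sum m' t"
  unfolding geom_sum_def by (intro sum_mono2) auto

lemma geom_sum_ge_1: "1 \<le> m \<Longrightarrow> 0 \<le> t \<Longrightarrow> 1 \<le> geom_sum m t"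
  using geom_sum_mono[of t 1 m] by (simp add: geom_sum_Suc[of 0, simplified])

lemma isCont_geom_sum: "isCont (geom_sum m) t"
  unfolding geom_sum_def by (intro continuous_intros)

lemma power_mult_power_swap_le:
  fixes s t :: real
  assumes "0 \<le> s" "s \<le> t" "a \<le> b"
  shows "t ^ a * s ^ b \<le> s ^ a * t ^ b"
proof -
  have "t ^ a * s ^ b = (s ^ a * t ^ a) * s ^ (b - a)"
    using assms by (simp add: power_add[symmetric] mult_ac flip: le_add_diff_inverse)
  also have "\<dots> \<le> (s ^ a * t ^ a) * t ^ (b - a)"
    using assms by (intro mult_left_mono power_mono) auto
  also have "\<dots> = s ^ a * t ^ b"
    using assms by (simp add: power_add[symmetric] mult_ac flip: le_add_diff_inverse)
  finally show ?thesis .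
qed

lemma geom_sum_cross_diff:
  assumes "k \<le> j"
  shows "geom_sum k s * geom_sum j t - geom_sum k t * geom_sum j s =
     (\<Sum>a<k. \<Sum>b\<in>{k..<j}. s ^ a * t ^ b - t ^ a * s ^ b)"
proof -
  have split: "geom_sum j x = geom_sum k x + (\<Sum>b\<in>{k..<j}. x ^ b)" for x
    unfolding geom_sum_def using assms
    by (metis lessThan_atLeast0 sum.atLeastLessThan_concat zero_le)
  have "geom_sum k s * geom_sum j t - geom_sum k t * geom_sum j s =
      geom_sum k s * (\<Sum>b\<in>{k..<j}. t ^ b) - geom_sum k t * (\<Sum>b\<in>{k..<j}. s ^ b)"
    by (simp only: split) (simp add: algebra_simps)
  also have "\<dots> = (\<Sum>a<k. \<Sum>b\<in>{k..<j}. s ^ a * t ^ b) - (\<Sum>a<k. \<Sum>b\<in>{k..<j}. t ^ a * s ^ b)"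
    unfolding geom_sum_def by (simp only: sum_product)
  also have "\<dots> = (\<Sum>a<k. \<Sum>b\<in>{k..<j}. s ^ a * t ^ b - t ^ a * s ^ b)"
    by (simp add: sum_subtractf)
  finally show ?thesis .
qed

lemma geom_sum_cross_le:
  assumes "k \<le> j" "0 \<le> s" "s \<le> t"
  shows "geom_sum k t * geom_sum j s \<le> geom_sum k s * geom_sum j t"
proof -
  have "0 \<le> (\<Sum>a<k. \<Sum>b\<in>{k..<j}. s ^ a * t ^ b - t ^ a * s ^ b)"
    using assms power_mult_power_swap_le[of s t] by (intro sum_nonneg) auto
  then show ?thesis using geom_sum_cross_diff[OF assms(1), of s t] by simp
qed

lemma geom_sum_cross_less:
  assumes "1 \<le> k" "k < j" "0 \<le> s" "s < t"
  shows "geom_sum k t * geom_sum j s < geom_sum k s * geom_sum j t"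
proof -
  \<comment> \<open>the summand \<open>a = 0, b = k\<close> is positive, all others are nonnegative\<close>
  have "0 < (\<Sum>a<k. \<Sum>b\<in>{k..<j}. s ^ a * t ^ b - t ^ a * s ^ b)"
  proof (rule sum_pos2)
    show "0 < (\<Sum>b\<in>{k..<j}. s ^ 0 * t ^ b - t ^ 0 * s ^ b)"
    proof (rule sum_pos2)
      show "0 < s ^ 0 * t ^ k - t ^ 0 * s ^ k"
        using assms power_strict_mono[of s t k] by simp
      show "\<And>i. i \<in> {k..<j} \<Longrightarrow> 0 \<le> s ^ 0 * t ^ i - t ^ 0 * s ^ i"
        using assms power_mono[of s t] by simp
    qed (use assms in auto)
    show "\<And>i. i \<in> {..<k} \<Longrightarrow> 0 \<le> (\<Sum>b\<in>{k..<j}. s ^ i * t ^ b - t ^ i * s ^ b)"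
      using assms power_mult_power_swap_le[of s t] by (intro sum_nonneg) auto
  qed (use assms in auto)
  then show ?thesis using geom_sum_cross_diff[of k j s t] assms by simp
qed

lemma geom_cdf_0 [simp]: "geom_cdf j 0 t = 0"
  by (simp add: geom_cdf_def)

lemma geom_cdf_self: "1 \<le> j \<Longrightarrow> 0 \<le> t \<Longrightarrow> geom_cdf j j t = 1"
  unfolding geom_cdf_def using geom_sum_ge_1[of j t] by simp

lemma geom_cdf_nonneg: "0 \<le> t \<Longrightarrow> 0 \<le> geom_cdf j k t"
  unfolding geom_cdf_def using geom_sum_nonneg by simp

lemma geom_cdf_mono: "1 \<le> j \<Longrightarrow> 0 \<le> t \<Longrightarrow> k \<le> k' \<Longrightarrow> geom_cdf j k t \<le> geom_cdf j k' t"
  unfolding geom_cdf_def using geom_sum_ge_1[of j t] geom_sum_mono[of t k k']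
  by (simp add: divide_right_mono)

lemma geom_cdf_le_1: "1 \<le> j \<Longrightarrow> 0 \<le> t \<Longrightarrow> k \<le> j \<Longrightarrow> geom_cdf j k t \<le> 1"
  using geom_cdf_mono[of j t k j] geom_cdf_self by simp

lemma geom_cdf_Suc_diff: "geom_cdf j (Suc c) t - geom_cdf j c t = t ^ c / geom_sum j t"
  unfolding geom_cdf_def geom_sum_Suc by (simp add: add_divide_distrib)

lemma geom_cdf_strict_mono:
  assumes "1 \<le> j" "0 < t" "k < k'"
  shows "geom_cdf j k t < geom_cdf j k' t"
proof -
  have "0 < t ^ k / geom_sum j t" using geom_sum_ge_1[of j t] assms by simp
  then have "geom_cdf j k t < geom_cdf j (Suc k) t"
    using geom_cdf_Suc_diff[of j k t] by simp
  also have "\<dots> \<le> geom_cdf j k' t" using geom_cdf_mono[of j t "Suc k" k'] assms by simp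
  finally show ?thesis .
qed

lemma geom_cdf_antimono:
  assumes "1 \<le> j" "k \<le> j" "0 \<le> s" "s \<le> t"
  shows "geom_cdf j k t \<le> geom_cdf j k s"
  using geom_sum_cross_le[OF assms(2-4)] geom_sum_ge_1[of j s] geom_sum_ge_1[of j t] assms
  unfolding geom_cdf_def by (simp add: divide_simps mult_ac)

lemma geom_cdf_strict_antimono:
  assumes "1 \<le> k" "k < j" "0 \<le> s" "s < t"
  shows "geom_cdf j k t < geom_cdf j k s"
  using geom_sum_cross_less[OF assms] geom_sum_ge_1[of j s] geom_sum_ge_1[of j t] assms
  unfolding geom_cdf_def by (simp add: divide_simps mult_ac)

lemma isCont_geom_cdf: "1 \<le> j \<Longrightarrow> 0 \<le> t \<Longrightarrow> isCont (geom_cdf j k) t"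
  unfolding geom_cdf_def[abs_def] using geom_sum_ge_1[of j t]
  by (intro isCont_divide isCont_geom_sum) auto

section \<open>The codes \<open>fj\<close> as quantile functions\<close>

lemma le_ln_div_ln_iff:
  fixes t w :: real
  assumes "0 < t" "t \<noteq> 1" "0 < w"
  shows "real k \<le> ln w / ln t \<longleftrightarrow> 0 \<le> (t ^ k - w) * (1 - t)"
proof (cases "t < 1")
  case True
  then have "real k \<le> ln w / ln t \<longleftrightarrow> ln w \<le> ln (t ^ k)"
    using assms by (simp add: le_divide_eq ln_realpow mult.commute)
  also have "\<dots> \<longleftrightarrow> w \<le> t ^ k" using assms by simp
  finally show ?thesis using True by (simp add: zero_le_mult_iff)
next
  case False
  then have "1 < t" using assms by simp
  then have "real k \<le> ln w / ln t \<longleftrightarrow> ln (t ^ k) \<le> ln w"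
    using assms by (simp add: le_divide_eq ln_realpow mult.commute)
  also have "\<dots> \<longleftrightarrow> t ^ k \<le> w" using assms by simp
  finally show ?thesis using \<open>1 < t\<close> by (simp add: zero_le_mult_iff)
qed

lemma fj_ge_iff:
  assumes j: "1 \<le> j" and u: "0 \<le> u" "u < 1" and t: "0 \<le> t"
  shows "int k \<le> fj j t u \<longleftrightarrow> geom_cdf j k t \<le> u"
proof -
  consider "t = 0" | "t = 1" | "0 < t" "t \<noteq> 1" using t by linarith
  then show ?thesis
  proof cases
    case 1
    then show ?thesis using j u by (simp add: fj_def geom_cdf_def geom_sum_at_0)
  next
    case 2
    have "int k \<le> \<lfloor>real j * u\<rfloor> \<longleftrightarrow> real k \<le> real j * u" by (simp add: le_floor_iff)
    also have "\<dots> \<longleftrightarrow> real k / real j \<le> u" using j by (simp add: divide_simps mult_ac)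
    finally show ?thesis using 2 by (simp add: fj_def geom_cdf_def geom_sum_at_1)
  next
    case 3
    define w where "w = 1 - u * (1 - t ^ j)"
    have "0 < (1 - u) + u * t ^ j" using u 3 by (intro add_pos_nonneg) auto
    then have "0 < w" by (simp add: w_def algebra_simps)
    have "fj j t u = \<lfloor>ln w / ln t\<rfloor>" using 3 by (simp add: fj_def w_def)
    then have "int k \<le> fj j t u \<longleftrightarrow> real k \<le> ln w / ln t" by (simp add: le_floor_iff)
    also have "\<dots> \<longleftrightarrow> 0 \<le> (t ^ k - w) * (1 - t)" by (rule le_ln_div_ln_iff) (use 3 \<open>0 < w\<close> in auto)
    also have "(t ^ k - w) * (1 - t) = (1 - t)\<^sup>2 * (u * geom_sum j t - geom_sum k t)"
    proof -
      have tj: "t ^ j = 1 - (1 - t) * geom_sum j t" and tk: "t ^ k = 1 - (1 - t) * geom_sum k t"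
        using one_minus_mult_geom_sum[of t j] one_minus_mult_geom_sum[of t k] by simp_all
      show ?thesis unfolding w_def tj tk by (simp add: algebra_simps power2_eq_square)
    qed
    also have "0 \<le> \<dots> \<longleftrightarrow> geom_sum k t \<le> u * geom_sum j t"
      using 3 by (simp add: zero_le_mult_iff)
    also have "\<dots> \<longleftrightarrow> geom_cdf j k t \<le> u"
      using geom_sum_ge_1[OF j t] by (simp add: geom_cdf_def divide_le_eq mult.commute)
    finally show ?thesis .
  qed
qed

definition fj_left :: "nat \<Rightarrow> real \<Rightarrow> real \<Rightarrow> int" where
  "fj_left j t u = int (card {k \<in> {1..<j}. geom_cdf j k t < u})"

lemma card_geom_cdf_eq_le_1:
  assumes "1 \<le> j" "0 < t"
  shows "card {k \<in> {1..<j}. geom_cdf j k t = u} \<le> 1"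
proof -
  have "x = y" if "geom_cdf j x t = u" "geom_cdf j y t = u" for x y
    using that geom_cdf_strict_mono[OF assms, of x y] geom_cdf_strict_mono[OF assms, of y x]
    by (cases x y rule: linorder_cases) auto
  moreover have "finite {k \<in> {1..<j}. geom_cdf j k t = u}" by simp
  ultimately show ?thesis using card_le_Suc0_iff_eq by (metis (mono_tags, lifting) One_nat_def mem_Collect_eq)
qed

context
  fixes j :: nat and u :: real
  assumes j: "1 \<le> j" and u: "0 \<le> u" "u < 1"
begin

lemma fj_range: "0 \<le> t \<Longrightarrow> 0 \<le> fj j t u \<and> fj j t u \<le> int j - 1"
proof -
  assume t: "0 \<le> t"
  have "int 0 \<le> fj j t u" using fj_ge_iff[OF j u t, of 0] u by simp
  moreover have "\<not> int j \<le> fj j t u" using fj_ge_iff[OF j u t, of j] geom_cdf_self[OF j t] u by simp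
  ultimately show ?thesis by simp
qed

lemma fj_eq_card: "0 \<le> t \<Longrightarrow> fj j t u = int (card {k \<in> {1..<j}. geom_cdf j k t \<le> u})"
proof -
  assume t: "0 \<le> t"
  define m where "m = fj j t u"
  have m: "0 \<le> m" "m \<le> int j - 1" using fj_range[OF t] unfolding m_def by auto
  have "{k \<in> {1..<j}. geom_cdf j k t \<le> u} = {k \<in> {1..<j}. int k \<le> m}"
    using fj_ge_iff[OF j u t] unfolding m_def by auto
  also have "\<dots> = {1..nat m}" using m by auto
  finally show ?thesis using m unfolding m_def by simp
qed

lemma fj_eq_fj_left_add:
  "0 \<le> t \<Longrightarrow> fj j t u = fj_left j t u + int (card {k \<in> {1..<j}. geom_cdf j k t = u})"
proof -
  assume t: "0 \<le> t"
  have "{k \<in> {1..<j}. geom_cdf j k t \<le> u} =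
      {k \<in> {1..<j}. geom_cdf j k t < u} \<union> {k \<in> {1..<j}. geom_cdf j k t = u}" by auto
  then have "card {k \<in> {1..<j}. geom_cdf j k t \<le> u} =
      card {k \<in> {1..<j}. geom_cdf j k t < u} + card {k \<in> {1..<j}. geom_cdf j k t = u}"
    by (simp add: card_Un_disjoint disjoint_iff)
  then show ?thesis using fj_eq_card[OF t] by (simp add: fj_left_def)
qed

lemma fj_mono: "0 \<le> s \<Longrightarrow> s \<le> t \<Longrightarrow> fj j s u \<le> fj j t u"
proof -
  assume st: "0 \<le> s" "s \<le> t"
  have "{k \<in> {1..<j}. geom_cdf j k s \<le> u} \<subseteq> {k \<in> {1..<j}. geom_cdf j k t \<le> u}"
  proof
    fix k assume "k \<in> {k \<in> {1..<j}. geom_cdf j k s \<le> u}"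
    then show "k \<in> {k \<in> {1..<j}. geom_cdf j k t \<le> u}"
      using geom_cdf_antimono[OF j _ st, of k] by auto
  qed
  then have "card {k \<in> {1..<j}. geom_cdf j k s \<le> u} \<le> card {k \<in> {1..<j}. geom_cdf j k t \<le> u}"
    by (intro card_mono) auto
  then show ?thesis using fj_eq_card st by simp
qed

text \<open>Each threshold \<open>geom_cdf j k\<close> is continuous and decreasing in \<open>t\<close>, so the set of
  thresholds below \<open>u\<close> is locally constant to the right of \<open>t\<close>; to the left of \<open>t\<close> it is
  the set of thresholds strictly below \<open>u\<close> at \<open>t\<close>.\<close>
lemma eventually_at_right_fj: "0 \<le> t \<Longrightarrow> \<forall>\<^sub>F s in at_right t. fj j s u = fj j t u"
proof -
  assume t: "0 \<le> t"
  have ev: "\<forall>\<^sub>F s in at_right t. geom_cdf j k s \<le> u \<longleftrightarrow> geom_cdf j k t \<le> u" if k: "k \<in> {1..<j}" for k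
  proof (cases "geom_cdf j k t \<le> u")
    case True
    show ?thesis using eventually_at_right_less[of t]
    proof eventually_elim
      case (elim s)
      then have "geom_cdf j k s \<le> geom_cdf j k t" using geom_cdf_antimono[OF j _ t] k by auto
      then show ?case using True by auto
    qed
  next
    case False
    have "(geom_cdf j k \<longlongrightarrow> geom_cdf j k t) (at_right t)"
      using isCont_geom_cdf[OF j t, of k] unfolding isCont_def
      by (rule filterlim_at_split[THEN iffD1, THEN conjunct2])
    then have "\<forall>\<^sub>F s in at_right t. u < geom_cdf j k s" using False by (intro order_tendstoD) auto
    then show ?thesis by eventually_elim (use False in auto)
  qed
  have "\<forall>\<^sub>F s in at_right t. (\<forall>k\<in>{1..<j}. geom_cdf j k s \<le> u \<longleftrightarrow> geom_cdf j k t \<le> u) \<and> t < s"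
    using eventually_ball_finite[of "{1..<j}", OF _ ballI[OF ev]] eventually_at_right_less[of t]
    by (auto intro: eventually_conj)
  then show ?thesis
  proof eventually_elim
    case (elim s)
    then have "{k \<in> {1..<j}. geom_cdf j k s \<le> u} = {k \<in> {1..<j}. geom_cdf j k t \<le> u}" by auto
    then show ?case using fj_eq_card t elim by simp
  qed
qed

lemma eventually_at_left_fj: "0 < t \<Longrightarrow> \<forall>\<^sub>F s in at_left t. fj j s u = fj_left j t u"
proof -
  assume t: "0 < t"
  have pos: "\<forall>\<^sub>F s in at_left t. s \<in> {0<..<t}" using eventually_at_left_real[OF t] .
  have ev: "\<forall>\<^sub>F s in at_left t. geom_cdf j k s \<le> u \<longleftrightarrow> geom_cdf j k t < u" if k: "k \<in> {1..<j}" for k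
  proof (cases "geom_cdf j k t < u")
    case True
    have "(geom_cdf j k \<longlongrightarrow> geom_cdf j k t) (at_left t)"
      using isCont_geom_cdf[OF j, of t k] t unfolding isCont_def
      by (intro filterlim_at_split[THEN iffD1, THEN conjunct1]) auto
    then have "\<forall>\<^sub>F s in at_left t. geom_cdf j k s < u" using True by (intro order_tendstoD) auto
    then show ?thesis by eventually_elim (use True in auto)
  next
    case False
    show ?thesis using pos
    proof eventually_elim
      case (elim s)
      then have "geom_cdf j k t < geom_cdf j k s" using k by (intro geom_cdf_strict_antimono) auto
      then show ?case using False by auto
    qed
  qed
  have "\<forall>\<^sub>F s in at_left t. (\<forall>k\<in>{1..<j}. geom_cdf j k s \<le> u \<longleftrightarrow> geom_cdf j k t < u) \<and> s \<in> {0<..<t}"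
    using eventually_ball_finite[of "{1..<j}", OF _ ballI[OF ev]] pos
    by (auto intro: eventually_conj)
  then show ?thesis
  proof eventually_elim
    case (elim s)
    then have "{k \<in> {1..<j}. geom_cdf j k s \<le> u} = {k \<in> {1..<j}. geom_cdf j k t < u}" by auto
    then show ?case using fj_eq_card[of s] elim by (simp add: fj_left_def)
  qed
qed

lemma fj_eq_iff:
  assumes "0 \<le> t"
  shows "fj j t u = int c \<longleftrightarrow> geom_cdf j c t \<le> u \<and> u < geom_cdf j (Suc c) t"
  using fj_ge_iff[OF j u assms, of c] fj_ge_iff[OF j u assms, of "Suc c"] by auto

end

lemma measurable_fj: "(\<lambda>u. fj j t u) \<in> borel \<rightarrow>\<^sub>M count_space UNIV"
proof -
  consider "t = 0" | "t = 1" | "t \<noteq> 0" "t \<noteq> 1" by blast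
  then show ?thesis
  proof cases
    case 1
    then show ?thesis by (simp add: fj_def)
  next
    case 2
    then have "(\<lambda>u. fj j t u) = (\<lambda>u. \<lfloor>real j * u\<rfloor>)" by (simp add: fj_def fun_eq_iff)
    then show ?thesis by simp
  next
    case 3
    then have "(\<lambda>u. fj j t u) = (\<lambda>u. \<lfloor>ln (1 - u * (1 - t ^ j)) / ln t\<rfloor>)"
      by (simp add: fj_def fun_eq_iff)
    then show ?thesis by simp
  qed
qed

section \<open>Sample paths\<close>

context
  fixes n :: nat and U :: "nat \<Rightarrow> 'w \<Rightarrow> real" and \<omega> :: 'w
  assumes unit: "\<forall>j\<in>{1..n}. U j \<omega> \<in> {0..<1}"
begin

lemma unit_coordinate: "j \<in> {1..n} \<Longrightarrow> 1 \<le> j \<and> 0 \<le> U j \<omega> \<and> U j \<omega> < 1"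
  using unit by auto

lemma fj_codes_in_Ecodes: "0 \<le> t \<Longrightarrow> (\<lambda>j. fj j t (U j \<omega>)) \<in> Ecodes n"
  unfolding Ecodes_def using fj_range unit_coordinate by blast

lemma uniform_mallows_permutes: "0 \<le> t \<Longrightarrow> uniform_mallows n U t \<omega> permutes {1..n}"
  unfolding uniform_mallows_def using Phi_spec[OF fj_codes_in_Ecodes] by blast

lemma InvJ_uniform_mallows:
  "0 \<le> t \<Longrightarrow> j \<in> {1..n} \<Longrightarrow> int (InvJ j (uniform_mallows n U t \<omega>)) = fj j t (U j \<omega>)"
  unfolding uniform_mallows_def using Phi_spec[OF fj_codes_in_Ecodes] by blast

lemma InvJ_uniform_mallows_mono:
  assumes "j \<in> {1..n}" "0 \<le> s" "s \<le> t"
  shows "InvJ j (uniform_mallows n U s \<omega>) \<le> InvJ j (uniform_mallows n U t \<omega>)"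
proof -
  have "fj j s (U j \<omega>) \<le> fj j t (U j \<omega>)" using fj_mono unit_coordinate assms by blast
  moreover have "0 \<le> t" using assms by linarith
  ultimately show ?thesis using InvJ_uniform_mallows assms by (metis of_nat_le_iff)
qed

lemma eventually_at_right_uniform_mallows:
  "0 \<le> t \<Longrightarrow> \<forall>\<^sub>F s in at_right t. uniform_mallows n U s \<omega> = uniform_mallows n U t \<omega>"
proof -
  assume t: "0 \<le> t"
  have "\<forall>\<^sub>F s in at_right t. \<forall>j\<in>{1..n}. fj j s (U j \<omega>) = fj j t (U j \<omega>)"
    using unit_coordinate t by (intro eventually_ball_finite ballI eventually_at_right_fj) auto
  then show ?thesis
    unfolding uniform_mallows_def by eventually_elim (rule Phi_cong, blast)
qed

lemma eventually_at_left_uniform_mallows: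
  "0 < t \<Longrightarrow> \<forall>\<^sub>F s in at_left t. uniform_mallows n U s \<omega> = Phi n (\<lambda>j. fj_left j t (U j \<omega>))"
proof -
  assume t: "0 < t"
  have "\<forall>\<^sub>F s in at_left t. \<forall>j\<in>{1..n}. fj j s (U j \<omega>) = fj_left j t (U j \<omega>)"
    using unit_coordinate t by (intro eventually_ball_finite ballI eventually_at_left_fj) auto
  then show ?thesis
    unfolding uniform_mallows_def by eventually_elim (rule Phi_cong, blast)
qed

lemma left_lim_uniform_mallows:
  assumes "0 < t"
  shows "left_lim (\<lambda>s. uniform_mallows n U s \<omega>) t = Phi n (\<lambda>j. fj_left j t (U j \<omega>))"
  unfolding left_lim_def using assms
proof (simp, intro the_equality)
  show "\<forall>\<^sub>F s in at_left t. uniform_mallows n U s \<omega> = Phi n (\<lambda>j. fj_left j t (U j \<omega>))"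
    by (rule eventually_at_left_uniform_mallows[OF assms])
  fix a assume "\<forall>\<^sub>F s in at_left t. uniform_mallows n U s \<omega> = a"
  then have "\<forall>\<^sub>F s in at_left t. a = Phi n (\<lambda>j. fj_left j t (U j \<omega>))"
    using eventually_at_left_uniform_mallows[OF assms] by eventually_elim auto
  then show "a = Phi n (\<lambda>j. fj_left j t (U j \<omega>))" by simp
qed

lemma cadlag_uniform_mallows: "cadlag_discrete (\<lambda>t. uniform_mallows n U t \<omega>)"
  unfolding cadlag_discrete_def
  using eventually_at_right_uniform_mallows eventually_at_left_uniform_mallows by blast

text \<open>At a time \<open>t\<close>, the code \<open>fj j \<cdot> (U j \<omega>)\<close> jumps by the number of thresholds
  \<open>geom_cdf j k t\<close> that equal \<open>U j \<omega>\<close>; there is at most one such \<open>k\<close>, and by assumption at most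
  one coordinate \<open>j\<close> jumps at \<open>t\<close>.\<close>
lemma Inv_uniform_mallows_jump:
  assumes distinct: "\<forall>j j' k k' s. j \<in> {1..n} \<longrightarrow> j' \<in> {1..n} \<longrightarrow> j \<noteq> j' \<longrightarrow> k \<in> {1..<j} \<longrightarrow>
      k' \<in> {1..<j'} \<longrightarrow> 0 < s \<longrightarrow> geom_cdf j k s = U j \<omega> \<longrightarrow> geom_cdf j' k' s \<noteq> U j' \<omega>"
    and t: "0 \<le> t"
  shows "Inv n (uniform_mallows n U t \<omega>) \<le> Inv n (left_lim (\<lambda>s. uniform_mallows n U s \<omega>) t) + 1"
proof (cases "t = 0")
  case False
  then have t: "0 < t" using t by simp
  define D where "D j = card {k \<in> {1..<j}. geom_cdf j k t = U j \<omega>}" for j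
  have split: "fj j t (U j \<omega>) = fj_left j t (U j \<omega>) + int (D j)" if "j \<in> {1..n}" for j
    using unit_coordinate[OF that] t fj_eq_fj_left_add[of j "U j \<omega>" t] unfolding D_def by simp
  have "(\<lambda>j. fj_left j t (U j \<omega>)) \<in> Ecodes n"
    unfolding Ecodes_def
  proof (intro CollectI ballI)
    fix j assume j: "j \<in> {1..n}"
    have "fj j t (U j \<omega>) \<le> int j - 1"
      using unit_coordinate[OF j] t fj_range[of j "U j \<omega>" t] by simp
    then show "0 \<le> fj_left j t (U j \<omega>) \<and> fj_left j t (U j \<omega>) \<le> int j - 1"
      using split[OF j] by (simp add: fj_left_def)
  qed
  then have "int (InvJ j (Phi n (\<lambda>j. fj_left j t (U j \<omega>)))) = fj_left j t (U j \<omega>)" if "j \<in> {1..n}" for j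
    using Phi_spec that by blast
  then have left: "int (Inv n (left_lim (\<lambda>s. uniform_mallows n U s \<omega>) t)) = (\<Sum>j\<in>{1..n}. fj_left j t (U j \<omega>))"
    by (simp add: Inv_def left_lim_uniform_mallows[OF t])
  have "int (Inv n (uniform_mallows n U t \<omega>)) = (\<Sum>j\<in>{1..n}. fj j t (U j \<omega>))"
    using InvJ_uniform_mallows t by (simp add: Inv_def)
  also have "\<dots> = (\<Sum>j\<in>{1..n}. fj_left j t (U j \<omega>) + int (D j))"
    by (rule sum.cong) (simp_all add: split)
  also have "\<dots> = int (Inv n (left_lim (\<lambda>s. uniform_mallows n U s \<omega>) t)) + int (sum D {1..n})"
    by (simp add: sum.distrib left)
  finally have jump: "int (Inv n (uniform_mallows n U t \<omega>)) =
      int (Inv n (left_lim (\<lambda>s. uniform_mallows n U s \<omega>) t)) + int (sum D {1..n})" .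
  have witness: "\<exists>k\<in>{1..<j}. geom_cdf j k t = U j \<omega>" if "D j \<noteq> 0" for j
    using that unfolding D_def by (metis (mono_tags, lifting) card.empty empty_Collect_eq)
  have "sum D {1..n} \<le> 1"
  proof (rule sum_le_1_if_at_most_one_nonzero)
    show "D j \<le> 1" if "j \<in> {1..n}" for j
      unfolding D_def using card_geom_cdf_eq_le_1 that t by simp
    show "j = j'" if "j \<in> {1..n}" "j' \<in> {1..n}" "D j \<noteq> 0" "D j' \<noteq> 0" for j j'
      using witness[OF that(3)] witness[OF that(4)] distinct that t by blast
  qed
  then show ?thesis using jump by linarith
qed (simp add: left_lim_def)

end

section \<open>Independent uniform codes\<close>

abbreviation uniform01 :: "real measure" where
  "uniform01 \<equiv> uniform_measure lborel {0..1}"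

lemma emeasure_uniform01: "B \<in> sets borel \<Longrightarrow> emeasure uniform01 B = emeasure lborel ({0..1} \<inter> B)"
  by (subst emeasure_uniform_measure) (auto simp: divide_ennreal_def)

lemma emeasure_uniform01_singleton: "emeasure uniform01 {y} = 0"
proof -
  have "emeasure uniform01 {y} = emeasure lborel ({0..1} \<inter> {y})" by (rule emeasure_uniform01) auto
  also have "\<dots> \<le> emeasure lborel {y}" by (intro emeasure_mono) auto
  finally show ?thesis by simp
qed

locale indep_unit_uniforms = prob_space M for M :: "'w measure" +
  fixes n :: nat and U :: "nat \<Rightarrow> 'w \<Rightarrow> real"
  assumes indep: "indep_vars (\<lambda>_. borel) U {1..n}"
    and uniform: "\<And>j. j \<in> {1..n} \<Longrightarrow> distr M lborel (U j) = uniform01"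
begin

lemma random_variable_U: "j \<in> {1..n} \<Longrightarrow> random_variable borel (U j)"
  using indep unfolding indep_vars_def by auto

lemma distr_U: "j \<in> {1..n} \<Longrightarrow> distr M borel (U j) = uniform01"
  using uniform by (metis distr_cong sets_lborel)

lemma emeasure_U:
  "j \<in> {1..n} \<Longrightarrow> B \<in> sets borel \<Longrightarrow> emeasure M (U j -` B \<inter> space M) = emeasure lborel ({0..1} \<inter> B)"
  using emeasure_distr[OF random_variable_U, of j B] distr_U[of j] emeasure_uniform01[of B] by simp

lemma AE_U_in_unit: "AE \<omega> in M. \<forall>j\<in>{1..n}. U j \<omega> \<in> {0..<1}"
proof (intro AE_finite_allI)
  fix j assume j: "j \<in> {1..n}"
  have B: "{..<0} \<union> {1..} \<in> sets (borel :: real measure)" by auto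
  have "{0..1} \<inter> ({..<0} \<union> {1..}) = {1::real}" by auto
  then have "emeasure M (U j -` ({..<0} \<union> {1..}) \<inter> space M) = 0"
    using emeasure_U[OF j B] by simp
  then show "AE \<omega> in M. U j \<omega> \<in> {0..<1}"
    by (rule AE_I[rotated]) (use measurable_sets[OF random_variable_U[OF j] B] in auto)
qed simp

lemma sets_fj_U_eq:
  assumes "j \<in> {1..n}" shows "{\<omega> \<in> space M. fj j t (U j \<omega>) = c} \<in> events"
  using measurable_sets[OF measurable_compose[OF random_variable_U[OF assms] measurable_fj[of j t]], of "{c}"]
  by (simp add: vimage_def Int_def conj_commute)

lemma prob_fj_eq:
  assumes j: "j \<in> {1..n}" and t: "0 \<le> t" and c: "c < j"
  shows "prob {\<omega> \<in> space M. fj j t (U j \<omega>) = int c} = t ^ c / geom_sum j t"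
proof -
  have j1: "1 \<le> j" using j by simp
  define I where "I = {geom_cdf j c t..<geom_cdf j (Suc c) t}"
  have "{\<omega> \<in> space M. fj j t (U j \<omega>) = int c} = (\<lambda>\<omega>. fj j t (U j \<omega>)) -` {int c} \<inter> space M" by auto
  also have "prob \<dots> = prob (U j -` I \<inter> space M)"
  proof (rule measure_eq_AE)
    show "AE \<omega> in M. \<omega> \<in> (\<lambda>\<omega>. fj j t (U j \<omega>)) -` {int c} \<inter> space M \<longleftrightarrow> \<omega> \<in> U j -` I \<inter> space M"
      using AE_U_in_unit by eventually_elim (use j fj_eq_iff[OF j1 _ _ t] in \<open>auto simp: I_def\<close>)
    show "(\<lambda>\<omega>. fj j t (U j \<omega>)) -` {int c} \<inter> space M \<in> events"
      by (intro measurable_sets[OF measurable_compose[OF random_variable_U[OF j] measurable_fj]]) auto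
    show "U j -` I \<inter> space M \<in> events"
      unfolding I_def by (intro measurable_sets[OF random_variable_U[OF j]]) auto
  qed
  also have "\<dots> = measure lborel ({0..1} \<inter> I)"
    using emeasure_U[OF j, of I] by (simp add: measure_def I_def)
  also have "{0..1} \<inter> I = I"
    using geom_cdf_nonneg[OF t, of j c] geom_cdf_le_1[OF j1 t, of "Suc c"] c by (auto simp: I_def)
  also have "measure lborel I = geom_cdf j (Suc c) t - geom_cdf j c t"
    using geom_cdf_mono[OF j1 t, of c "Suc c"] by (simp add: I_def)
  also have "\<dots> = t ^ c / geom_sum j t" by (rule geom_cdf_Suc_diff)
  finally show ?thesis .
qed

lemma prob_fj_codes_eq:
  assumes t: "0 \<le> t" and c: "\<And>j. j \<in> {1..n} \<Longrightarrow> c j < j"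
  shows "prob {\<omega> \<in> space M. \<forall>j\<in>{1..n}. fj j t (U j \<omega>) = int (c j)} = (\<Prod>j\<in>{1..n}. t ^ c j / geom_sum j t)"
proof (cases "n = 0")
  case True
  then show ?thesis by (simp add: prob_space)
next
  case False
  have "indep_vars (\<lambda>_. count_space UNIV) (\<lambda>j \<omega>. fj j t (U j \<omega>)) {1..n}"
    by (rule indep_vars_compose2[OF indep measurable_fj])
  then have "prob (\<Inter>j\<in>{1..n}. (\<lambda>\<omega>. fj j t (U j \<omega>)) -` {int (c j)} \<inter> space M) =
      (\<Prod>j\<in>{1..n}. prob ((\<lambda>\<omega>. fj j t (U j \<omega>)) -` {int (c j)} \<inter> space M))"
    using False by (intro indep_varsD) auto
  moreover have "(\<Inter>j\<in>{1..n}. (\<lambda>\<omega>. fj j t (U j \<omega>)) -` {int (c j)} \<inter> space M) =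
      {\<omega> \<in> space M. \<forall>j\<in>{1..n}. fj j t (U j \<omega>) = int (c j)}"
    using False by auto
  moreover have "prob ((\<lambda>\<omega>. fj j t (U j \<omega>)) -` {int (c j)} \<inter> space M) = t ^ c j / geom_sum j t"
    if "j \<in> {1..n}" for j
    using prob_fj_eq[OF that t c[OF that]] by (simp add: vimage_def Int_def conj_commute)
  ultimately show ?thesis by simp
qed

lemma measurable_uniform_mallows: "uniform_mallows n U t \<in> M \<rightarrow>\<^sub>M count_space UNIV"
proof -
  have "(\<lambda>\<omega>. Phi n (\<lambda>j. fj j t (U j \<omega>))) \<in> M \<rightarrow>\<^sub>M count_space UNIV"
    by (rule measurable_count_space_finite_family[where I="{1..n}"])
       (auto intro: Phi_cong measurable_compose[OF random_variable_U measurable_fj])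
  then show ?thesis unfolding uniform_mallows_def[abs_def] .
qed

lemma sets_uniform_mallows_eq: "{\<omega> \<in> space M. uniform_mallows n U t \<omega> = \<sigma>} \<in> events"
  using measurable_sets[OF measurable_uniform_mallows, of "{\<sigma>}" t] by (simp add: vimage_def Int_def conj_commute)

lemma prob_uniform_mallows_eq:
  assumes t: "0 \<le> t" and \<sigma>: "\<sigma> permutes {1..n}"
  shows "prob {\<omega> \<in> space M. uniform_mallows n U t \<omega> = \<sigma>} = mallows n t \<sigma>"
proof -
  have "prob {\<omega> \<in> space M. uniform_mallows n U t \<omega> = \<sigma>} =
      prob {\<omega> \<in> space M. \<forall>j\<in>{1..n}. fj j t (U j \<omega>) = int (InvJ j \<sigma>)}"
  proof (rule measure_eq_AE[OF _ sets_uniform_mallows_eq])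
    show "AE \<omega> in M. \<omega> \<in> {\<omega> \<in> space M. uniform_mallows n U t \<omega> = \<sigma>} \<longleftrightarrow>
        \<omega> \<in> {\<omega> \<in> space M. \<forall>j\<in>{1..n}. fj j t (U j \<omega>) = int (InvJ j \<sigma>)}"
      using AE_U_in_unit
    proof eventually_elim
      case (elim \<omega>)
      show ?case using Phi_eq_iff[OF fj_codes_in_Ecodes[of n U \<omega>, OF elim t] \<sigma>] by (simp add: uniform_mallows_def)
    qed
    show "{\<omega> \<in> space M. \<forall>j\<in>{1..n}. fj j t (U j \<omega>) = int (InvJ j \<sigma>)} \<in> events"
      by (intro sets.sets_Collect_finite_All sets_fj_U_eq) auto
  qed
  also have "\<dots> = (\<Prod>j\<in>{1..n}. t ^ InvJ j \<sigma> / geom_sum j t)"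
  proof (rule prob_fj_codes_eq[OF t])
    show "InvJ j \<sigma> < j" if "j \<in> {1..n}" for j using InvJ_less that by simp
  qed
  also have "\<dots> = mallows n t \<sigma>"
    unfolding mallows_def Inv_def geom_sum_def by (simp add: power_sum prod_dividef)
  finally show ?thesis .
qed

text \<open>The pairs of threshold values at a common time form a curve in the plane, which is the
  graph of a function since \<open>geom_cdf j k\<close> is injective; the independent pair
  \<open>(U j, U j')\<close> avoids it almost surely.\<close>
lemma AE_distinct_crossing_time:
  assumes j: "j \<in> {1..n}" and j': "j' \<in> {1..n}" and neq: "j \<noteq> j'" and k: "k \<in> {1..<j}"
  shows "AE \<omega> in M. \<forall>t>0. geom_cdf j k t = U j \<omega> \<longrightarrow> geom_cdf j' k' t \<noteq> U j' \<omega>"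
proof -
  define A where "A = (\<lambda>t. (geom_cdf j k t, geom_cdf j' k' t)) ` {0<..}"
  have "continuous_on {0<..} (\<lambda>t. (geom_cdf j k t, geom_cdf j' k' t))"
  proof (intro continuous_at_imp_continuous_on ballI)
    fix t :: real assume "t \<in> {0<..}"
    then have "isCont (geom_cdf j k) t" "isCont (geom_cdf j' k') t"
      using j j' isCont_geom_cdf by auto
    then show "isCont (\<lambda>t. (geom_cdf j k t, geom_cdf j' k' t)) t" by (rule continuous_Pair)
  qed
  then have A_sets: "A \<in> sets (borel \<Otimes>\<^sub>M borel)"
    unfolding A_def borel_prod by (rule sets_borel_image_Ioi)
  have graph: "y = y'" if xy: "(x, y) \<in> A" "(x, y') \<in> A" for x y y'
  proof -
    obtain s s' where s: "0 < s" "(x, y) = (geom_cdf j k s, geom_cdf j' k' s)"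
      and s': "0 < s'" "(x, y') = (geom_cdf j k s', geom_cdf j' k' s')"
      using xy unfolding A_def by (meson greaterThan_iff imageE)
    then have "geom_cdf j k s = geom_cdf j k s'" by simp
    then have "s = s'"
      using geom_cdf_strict_antimono[of k j s s'] geom_cdf_strict_antimono[of k j s' s] k s s'
      by (cases s s' rule: linorder_cases) auto
    then show ?thesis using s s' by simp
  qed
  have atomless: "emeasure (distr M borel (U j')) {y} = 0" for y
    using distr_U[OF j'] emeasure_uniform01_singleton by simp
  have "AE \<omega> in M. (U j \<omega>, U j' \<omega>) \<notin> A"
    using AE_pair_notin_graph[OF indep_var_of_indep_vars[OF indep j j' neq] atomless A_sets graph] .
  then show ?thesis
  proof eventually_elim
    case (elim \<omega>)
    show ?case
    proof (intro allI impI notI)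
      fix t :: real assume "0 < t" "geom_cdf j k t = U j \<omega>" "geom_cdf j' k' t = U j' \<omega>"
      then have "(U j \<omega>, U j' \<omega>) \<in> A" unfolding A_def by (auto intro!: image_eqI[where x=t])
      then show False using elim by contradiction
    qed
  qed
qed

lemma AE_distinct_crossing_times:
  "AE \<omega> in M. \<forall>j j' k k' s. j \<in> {1..n} \<longrightarrow> j' \<in> {1..n} \<longrightarrow> j \<noteq> j' \<longrightarrow> k \<in> {1..<j} \<longrightarrow>
     k' \<in> {1..<j'} \<longrightarrow> 0 < s \<longrightarrow> geom_cdf j k s = U j \<omega> \<longrightarrow> geom_cdf j' k' s \<noteq> U j' \<omega>"
proof -
  have "AE \<omega> in M. \<forall>j\<in>{1..n}. \<forall>j'\<in>{1..n}. \<forall>k\<in>{1..<j}. \<forall>k'\<in>{1..<j'}. j \<noteq> j' \<longrightarrow>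
      (\<forall>t>0. geom_cdf j k t = U j \<omega> \<longrightarrow> geom_cdf j' k' t \<noteq> U j' \<omega>)"
    by (intro AE_finite_allI AE_impI AE_distinct_crossing_time) auto
  then show ?thesis by eventually_elim blast
qed

lemma indep_InvJ_paths:
  "indep_vars (\<lambda>_. PiM {0..} (\<lambda>_. count_space UNIV))
      (\<lambda>j \<omega>. restrict (\<lambda>t. InvJ j (uniform_mallows n U t \<omega>)) {0..}) {1..n}"
proof -
  \<comment> \<open>off a null set, the \<open>j\<close>-th inversion path is a function of \<open>U j\<close> alone\<close>
  define H where "H j u = restrict (\<lambda>t. nat (fj j t u)) {0::real..}" for j u
  have "H j \<in> borel \<rightarrow>\<^sub>M PiM {0..} (\<lambda>_. count_space UNIV)" for j
    unfolding H_def by (intro measurable_restrict measurable_compose[OF measurable_fj measurable_count_space])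
  then have indep_H: "indep_vars (\<lambda>_. PiM {0..} (\<lambda>_. count_space UNIV)) (\<lambda>j \<omega>. H j (U j \<omega>)) {1..n}"
    by (rule indep_vars_compose2[OF indep])
  obtain N where N: "N \<in> null_sets M" "\<And>\<omega>. \<omega> \<in> space M - N \<Longrightarrow> \<forall>j\<in>{1..n}. U j \<omega> \<in> {0..<1}"
    using AE_E3[OF AE_U_in_unit] by blast
  show ?thesis
  proof (rule indep_vars_AE_cong[OF indep_H _ N(1)])
    show "random_variable (PiM {0..} (\<lambda>_. count_space UNIV))
        (\<lambda>\<omega>. restrict (\<lambda>t. InvJ j (uniform_mallows n U t \<omega>)) {0..})" for j
      by (intro measurable_restrict measurable_compose[OF measurable_uniform_mallows measurable_count_space])
    fix j \<omega> assume "j \<in> {1..n}" "\<omega> \<in> space M - N"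
    then show "H j (U j \<omega>) = restrict (\<lambda>t. InvJ j (uniform_mallows n U t \<omega>)) {0..}"
      using InvJ_uniform_mallows[of n U \<omega>, symmetric] N(2) unfolding H_def by (auto simp: fun_eq_iff)
  qed
qed

end

theorem mainTheorem9:
  fixes M :: "'w measure" and n :: nat and U :: "nat \<Rightarrow> 'w \<Rightarrow> real"
  assumes "prob_space M"
    and "prob_space.indep_vars M (\<lambda>_. borel) U {1..n}"
    and "\<And>j. j \<in> {1..n} \<Longrightarrow> distr M lborel (U j) = uniform_measure lborel {0..1}"
  shows "regular_mallows_process M n (uniform_mallows n U)"
proof -
  interpret indep_unit_uniforms M n U
    using assms unfolding indep_unit_uniforms_def indep_unit_uniforms_axioms_def by blast
  show ?thesis
    unfolding regular_mallows_process_def mallows_process_def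
  proof (intro conjI allI impI)
    show "AE \<omega> in M. (\<forall>t\<ge>0. uniform_mallows n U t \<omega> permutes {1..n}) \<and>
        cadlag_discrete (\<lambda>t. uniform_mallows n U t \<omega>)"
      using AE_U_in_unit
    proof eventually_elim
      case (elim \<omega>)
      then show ?case using uniform_mallows_permutes[of n U \<omega>, OF elim] cadlag_uniform_mallows[of n U \<omega>, OF elim] by simp
    qed
    show "AE \<omega> in M. (\<forall>j\<in>{1..n}. \<forall>s t. 0 \<le> s \<longrightarrow> s \<le> t \<longrightarrow>
            InvJ j (uniform_mallows n U s \<omega>) \<le> InvJ j (uniform_mallows n U t \<omega>)) \<and>
          (\<forall>t\<ge>0. Inv n (uniform_mallows n U t \<omega>) \<le> Inv n (left_lim (\<lambda>s. uniform_mallows n U s \<omega>) t) + 1)"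
      using AE_U_in_unit AE_distinct_crossing_times
    proof eventually_elim
      case (elim \<omega>)
      then show ?case
        using InvJ_uniform_mallows_mono[of n U \<omega>, OF elim(1)] Inv_uniform_mallows_jump[of n U \<omega>, OF elim] by simp
    qed
    fix t :: real and \<sigma> assume "0 \<le> t" "\<sigma> permutes {1..n}"
    show "{\<omega> \<in> space M. uniform_mallows n U t \<omega> = \<sigma>} \<in> sets M"
      by (fact sets_uniform_mallows_eq)
    show "measure M {\<omega> \<in> space M. uniform_mallows n U t \<omega> = \<sigma>} = mallows n t \<sigma>"
      by (fact prob_uniform_mallows_eq[OF \<open>0 \<le> t\<close> \<open>\<sigma> permutes {1..n}\<close>])
  qed (fact indep_InvJ_paths)
qed

end
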